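(* Let $A$ be a synaptic algebra, $p,q\in P$, $c:=(pqp+p^{\perp}q^{\perp}p^{\perp})^{1/2}$ and $s:=(pq^{\perp}p+p^{\perp}qp^{\perp})^{1/2}$. Then: (i) $(s^{\circ})^{\perp}p=p(s^{\circ})^{\perp}=(s^{\circ})^{\perp}q=q(s^{\circ})^{\perp}=(s^{\circ})^{\perp}\wedge p=(s^{\circ})^{\perp}\wedge q=p\wedge q$; (ii) $(c^{\circ})^{\perp}p=p(c^{\circ})^{\perp}=(c^{\circ})^{\perp}q^{\perp}=q^{\perp}(c^{\circ})^{\perp}=(c^{\circ})^{\perp}\wedge p=(c^{\circ})^{\perp}\wedge q^{\perp}=p\wedge q^{\perp}$; (iii) $(c^{\circ})^{\perp}p^{\perp}=p^{\perp}(c^{\circ})^{\perp}=(c^{\circ})^{\perp}q=q(c^{\circ})^{\perp}=(c^{\circ})^{\perp}\wedge p^{\perp}=(c^{\circ})^{\perp}\wedge q=p^{\perp}\wedge q$; (iv) $(s^{\circ})^{\perp}p^{\perp}=p^{\perp}(s^{\circ})^{\perp}=(s^{\circ})^{\perp}q^{\perp}=q^{\perp}(s^{\circ})^{\perp}=(s^{\circ})^{\perp}\wedge p^{\perp}=(s^{\circ})^{\perp}\wedge q^{\perp}=p^{\perp}\wedge q^{\perp}$.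
   Context: Synaptic algebra (Foulis): $R$ is a real linear associative algebra with unit $1$, and $A\subseteq R$ is a real linear subspace with $1\in A$. For $a,b\in A$ write $aCb$ iff $ab=ba$; $C(a):=\{b\in A: aCb\}$; $CC(a):=\{b\in A: bCd \text{ for all } d\in C(a)\}$. $A$ is a synaptic algebra with enveloping algebra $R$ iff: (SA1) $A$ is a partially ordered archimedean real linear space with positive cone $A^+$, $1$ is an order unit, $\|\cdot\|$ the order-unit norm; (SA2) $a\in A\Rightarrow a^2\in A^+$; (SA3) $a,b\in A^+\Rightarrow aba\in A^+$; (SA4) if $a\in A$, $b\in A^+$, $aba=0$ then $ab=ba=0$; (SA5) if $a\in A^+$ there is $b\in A^+\cap CC(a)$ with $b^2=a$; (SA6) for $a\in A$ there is $p=p^2\in A$ with $ab=0\Leftrightarrow pb=0$ for all $b\in A$; (SA7) if $1\le a$ there is $b\in A$ with $ab=ba=1$; (SA8) if $a,b\in A$, $a_1\le a_2\le\cdots$ are pairwise commuting elements of $C(b)$ with $\|a-a_n\|\to0$, then $a\in C(b)$. $A$ is nondegenerate. $P:=\{p\in A:p=p^2\}$ with the inherited order is an orthomodular lattice with $p^{\perp}:=1-p$, meet $\wedge$, join $\vee$. For $0\le a$, $a^{1/2}$ is its unique positive square root in $A$. The carrier $a^{\circ}$ of $a\in A$ is the unique projection such that for all $b\in A$, $ab=0\Leftrightarrow a^{\circ}b=0$. *)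

theory Defs
  imports Complex_Main
begin

text \<open>The enveloping algebra R is the type 'a, a real
linear associative algebra with unit (class real_algebra_1). The synaptic algebra is a
subset A of 'a; its partial order is given by its positive cone Apos.\<close>

definition sa_le :: "'a::real_algebra_1 set \<Rightarrow> 'a \<Rightarrow> 'a \<Rightarrow> bool" where
  "sa_le Apos x y \<longleftrightarrow> y - x \<in> Apos"

definition sa_commute :: "'a::real_algebra_1 \<Rightarrow> 'a \<Rightarrow> bool" where
  "sa_commute a b \<longleftrightarrow> a * b = b * a"

definition sa_C :: "'a::real_algebra_1 set \<Rightarrow> 'a \<Rightarrow> 'a set" where
  "sa_C A a = {b \<in> A. sa_commute a b}"

definition sa_CC :: "'a::real_algebra_1 set \<Rightarrow> 'a \<Rightarrow> 'a set" where
  "sa_CC A a = {b \<in> A. \<forall>d \<in> sa_C A a. sa_commute b d}"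

definition sa_norm :: "'a::real_algebra_1 set \<Rightarrow> 'a \<Rightarrow> real" where
  "sa_norm Apos a = Inf {l::real. 0 \<le> l \<and> sa_le Apos (- (l *\<^sub>R 1)) a \<and> sa_le Apos a (l *\<^sub>R 1)}"

definition synaptic_algebra :: "'a::real_algebra_1 set \<Rightarrow> 'a set \<Rightarrow> bool" where
  "synaptic_algebra A Apos \<longleftrightarrow>
     \<comment> \<open>A is a real linear subspace of R containing 1\<close>
     1 \<in> A \<and> (\<forall>x\<in>A. \<forall>y\<in>A. x + y \<in> A) \<and> (\<forall>x\<in>A. \<forall>r::real. r *\<^sub>R x \<in> A) \<and>
     \<comment> \<open>nondegenerate\<close>
     (1::'a) \<noteq> 0 \<and>
     \<comment> \<open>(SA1) partially ordered archimedean real linear space with positive cone Apos, 1 order unit\<close>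
     Apos \<subseteq> A \<and> 0 \<in> Apos \<and> (\<forall>x\<in>Apos. \<forall>y\<in>Apos. x + y \<in> Apos) \<and>
     (\<forall>x\<in>Apos. \<forall>r::real. 0 \<le> r \<longrightarrow> r *\<^sub>R x \<in> Apos) \<and>
     (\<forall>x\<in>Apos. - x \<in> Apos \<longrightarrow> x = 0) \<and>
     (\<forall>a\<in>A. \<forall>b\<in>A. (\<forall>n::nat. sa_le Apos (real n *\<^sub>R a) b) \<longrightarrow> sa_le Apos a 0) \<and>
     (\<forall>a\<in>A. \<exists>n::nat. sa_le Apos a (real n *\<^sub>R 1)) \<and>
     \<comment> \<open>(SA2)\<close>
     (\<forall>a\<in>A. a * a \<in> Apos) \<and>
     \<comment> \<open>(SA3)\<close>
     (\<forall>a\<in>Apos. \<forall>b\<in>Apos. a * b * a \<in> Apos) \<and>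
     \<comment> \<open>(SA4)\<close>
     (\<forall>a\<in>A. \<forall>b\<in>Apos. a * b * a = 0 \<longrightarrow> a * b = 0 \<and> b * a = 0) \<and>
     \<comment> \<open>(SA5)\<close>
     (\<forall>a\<in>Apos. \<exists>b\<in>Apos \<inter> sa_CC A a. b * b = a) \<and>
     \<comment> \<open>(SA6)\<close>
     (\<forall>a\<in>A. \<exists>p\<in>A. p = p * p \<and> (\<forall>b\<in>A. a * b = 0 \<longleftrightarrow> p * b = 0)) \<and>
     \<comment> \<open>(SA7)\<close>
     (\<forall>a\<in>A. sa_le Apos 1 a \<longrightarrow> (\<exists>b\<in>A. a * b = 1 \<and> b * a = 1)) \<and>
     \<comment> \<open>(SA8)\<close>
     (\<forall>a\<in>A. \<forall>b\<in>A. \<forall>s::nat \<Rightarrow> 'a.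
        (\<forall>n. s n \<in> sa_C A b) \<and> (\<forall>n. sa_le Apos (s n) (s (Suc n))) \<and>
        (\<forall>m n. sa_commute (s m) (s n)) \<and>
        (\<lambda>n. sa_norm Apos (a - s n)) \<longlonglongrightarrow> 0
        \<longrightarrow> a \<in> sa_C A b)"

definition sa_P :: "'a::real_algebra_1 set \<Rightarrow> 'a set" where
  "sa_P A = {p \<in> A. p = p * p}"

definition sa_perp :: "'a::real_algebra_1 \<Rightarrow> 'a" where
  "sa_perp p = 1 - p"

definition sa_meet :: "'a::real_algebra_1 set \<Rightarrow> 'a set \<Rightarrow> 'a \<Rightarrow> 'a \<Rightarrow> 'a" where
  "sa_meet A Apos p q = (THE r. r \<in> sa_P A \<and> sa_le Apos r p \<and> sa_le Apos r q \<and>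
      (\<forall>t\<in>sa_P A. sa_le Apos t p \<and> sa_le Apos t q \<longrightarrow> sa_le Apos t r))"

definition sa_sqrt :: "'a::real_algebra_1 set \<Rightarrow> 'a \<Rightarrow> 'a" where
  "sa_sqrt Apos a = (THE b. b \<in> Apos \<and> b * b = a)"

definition sa_carrier :: "'a::real_algebra_1 set \<Rightarrow> 'a \<Rightarrow> 'a" where
  "sa_carrier A a = (THE p. p \<in> sa_P A \<and> (\<forall>b\<in>A. a * b = 0 \<longleftrightarrow> p * b = 0))"

end

theory Submission
  imports Defs
begin

text \<open>Put \<open>d = p - q\<close>. Then \<open>pq\<^sup>\<perp>p + p\<^sup>\<perp>qp\<^sup>\<perp> = d\<^sup>2\<close>, so \<open>s = |d|\<close>, and
\<open>u = (s\<^sup>\<circ>)\<^sup>\<perp>\<close> is the largest projection annihilated by \<open>d\<close>: \<open>ud = du = 0\<close>, and every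
projection \<open>t\<close> with \<open>dt = 0\<close> lies below \<open>u\<close>. The element \<open>e = p + q - 1\<close> anticommutes
with \<open>d\<close>, hence commutes with \<open>d\<^sup>2\<close>, with its square root \<open>s\<close> and with the carrier of \<open>s\<close>.
Since \<open>2p = d + e + 1\<close>, \<open>u\<close> commutes with \<open>p\<close>, and \<open>up = uq\<close> because \<open>ud = 0\<close>. For
commuting projections the meet is the product, and \<open>up\<close> is the meet of \<open>p\<close> and \<open>q\<close>
since a projection below both is annihilated by \<open>d\<close>. Part (i) is this statement; (ii),
(iii), (iv) follow by replacing \<open>q\<close>, \<open>p\<close>, or both by their orthocomplements.\<close>

lemma idempotents_sandwich_sum:
  fixes p q :: "'b::ring_1"
  assumes "p * p = p" and "q * q = q"
  shows "p * (1 - q) * p + (1 - p) * q * (1 - p) = (p - q) * (p - q)"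
proof -
  have "p * (1 - q) * p = p - p * q * p" using assms by (simp add: algebra_simps)
  moreover have "(1 - p) * q * (1 - p) = q - q * p - p * q + p * q * p"
    using assms by (simp add: algebra_simps)
  moreover have "(p - q) * (p - q) = p - p * q - q * p + q"
    using assms by (simp add: algebra_simps)
  ultimately show ?thesis by (simp add: algebra_simps)
qed

lemma idempotents_anticommute:
  fixes p q :: "'b::ring_1"
  assumes "p * p = p" and "q * q = q"
  shows "(p + q - 1) * (p - q) = - ((p - q) * (p + q - 1))"
  using assms by (simp add: algebra_simps)

lemma commute_square_if_anticommute:
  fixes d e :: "'b::ring"
  assumes "e * d = - (d * e)"
  shows "e * (d * d) = (d * d) * e"
  by (metis assms minus_mult_left minus_mult_minus mult.assoc)

lemma commute_square_if_commute:
  fixes x y :: "'b::semigroup_mult"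
  assumes "x * y = y * x"
  shows "x * x * y = y * (x * x)"
  by (metis assms mult.assoc)

context
  fixes A Apos :: "'a::real_algebra_1 set"
  assumes SA: "synaptic_algebra A Apos"
begin

lemma synaptic_algebra_facts:
  "1 \<in> A" "\<forall>x\<in>A. \<forall>y\<in>A. x + y \<in> A" "\<forall>x\<in>A. \<forall>r::real. r *\<^sub>R x \<in> A"
  "Apos \<subseteq> A"
  "\<forall>x\<in>Apos. - x \<in> Apos \<longrightarrow> x = 0"
  "\<forall>a\<in>A. a * a \<in> Apos"
  "\<forall>a\<in>Apos. \<forall>b\<in>Apos. a * b * a \<in> Apos"
  "\<forall>a\<in>A. \<forall>b\<in>Apos. a * b * a = 0 \<longrightarrow> a * b = 0 \<and> b * a = 0"
  "\<forall>a\<in>Apos. \<exists>b\<in>Apos \<inter> sa_CC A a. b * b = a"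
  "\<forall>a\<in>A. \<exists>p\<in>A. p = p * p \<and> (\<forall>b\<in>A. a * b = 0 \<longleftrightarrow> p * b = 0)"
  using SA unfolding synaptic_algebra_def by - (elim conjE; assumption)+

lemma one_mem: "1 \<in> A"
  using synaptic_algebra_facts(1) .

lemma add_mem: "x \<in> A \<Longrightarrow> y \<in> A \<Longrightarrow> x + y \<in> A"
  using synaptic_algebra_facts(2) by blast

lemma scaleR_mem: "x \<in> A \<Longrightarrow> r *\<^sub>R x \<in> A"
  using synaptic_algebra_facts(3) by blast

lemma diff_mem: "x \<in> A \<Longrightarrow> y \<in> A \<Longrightarrow> x - y \<in> A"
  using add_mem[of x "(-1) *\<^sub>R y"] scaleR_mem[of y "-1"] by simp

lemma pos_mem: "x \<in> Apos \<Longrightarrow> x \<in> A"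
  using synaptic_algebra_facts(4) by blast

lemma pos_antisym: "x \<in> Apos \<Longrightarrow> - x \<in> Apos \<Longrightarrow> x = 0"
  using synaptic_algebra_facts(5) by blast

lemma square_pos: "x \<in> A \<Longrightarrow> x * x \<in> Apos"
  using synaptic_algebra_facts(6) by blast

lemma sandwich_pos: "a \<in> Apos \<Longrightarrow> b \<in> Apos \<Longrightarrow> a * b * a \<in> Apos"
  using synaptic_algebra_facts(7) by blast

lemma sandwich_eq_zero: "a \<in> A \<Longrightarrow> b \<in> Apos \<Longrightarrow> a * b * a = 0 \<Longrightarrow> a * b = 0 \<and> b * a = 0"
  using synaptic_algebra_facts(8) by blast

lemma pos_sqrt_exists: "a \<in> Apos \<Longrightarrow> \<exists>b\<in>Apos. b \<in> sa_CC A a \<and> b * b = a"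
  using synaptic_algebra_facts(9) by blast

lemma carrier_exists: "a \<in> A \<Longrightarrow> \<exists>p\<in>sa_P A. \<forall>b\<in>A. a * b = 0 \<longleftrightarrow> p * b = 0"
  using synaptic_algebra_facts(10) unfolding sa_P_def by blast

lemma one_pos: "1 \<in> Apos"
  using square_pos[OF one_mem] by simp

lemma jordan_mem:
  assumes "x \<in> A" and "y \<in> A"
  shows "x * y + y * x \<in> A"
proof -
  have "(x + y) * (x + y) - x * x - y * y \<in> A"
    by (intro diff_mem pos_mem[OF square_pos] add_mem assms)
  moreover have "(x + y) * (x + y) - x * x - y * y = x * y + y * x"
    by (simp add: algebra_simps)
  ultimately show ?thesis by simp
qed

lemma half_mem:
  assumes "x + x \<in> A"
  shows "x \<in> A"
proof -
  have "(1/2::real) *\<^sub>R (x + x) = x"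
    by (simp add: scaleR_add_right[symmetric] scaleR_add_left[symmetric])
  then show ?thesis using scaleR_mem[OF assms, of "1/2"] by simp
qed

lemma mult_mem_if_commute: "x \<in> A \<Longrightarrow> y \<in> A \<Longrightarrow> x * y = y * x \<Longrightarrow> x * y \<in> A"
  using jordan_mem[of x y] half_mem[of "x * y"] by simp

lemma sandwich_mem:
  assumes x: "x \<in> A" and y: "y \<in> A"
  shows "x * y * x \<in> A"
proof -
  have "x * (x * y + y * x) + (x * y + y * x) * x - (x * x * y + y * (x * x)) \<in> A"
    by (intro diff_mem jordan_mem x y pos_mem[OF square_pos])
  moreover have "x * (x * y + y * x) + (x * y + y * x) * x - (x * x * y + y * (x * x))
      = x * y * x + x * y * x"
    by (simp add: algebra_simps)
  ultimately show ?thesis using half_mem by metis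
qed

lemma pos_mult_eq_zero_sym: "a \<in> A \<Longrightarrow> b \<in> Apos \<Longrightarrow> a * b = 0 \<Longrightarrow> b * a = 0"
  using sandwich_eq_zero[of a b] by simp

lemma square_eq_zero_imp: "x \<in> A \<Longrightarrow> x * x = 0 \<Longrightarrow> x = 0"
  using sandwich_eq_zero[of x 1] one_pos by simp

lemma square_mult_pos_eq_zero_imp:
  assumes x: "x \<in> A" and t: "t \<in> Apos" and xxt: "x * x * t = 0"
  shows "x * t = 0 \<and> t * x = 0"
proof -
  have "(x * t * x) * (x * t * x) = x * t * (x * x * t) * x"
    by (simp add: mult.assoc)
  then have "x * t * x = 0"
    using square_eq_zero_imp[OF sandwich_mem[OF x pos_mem[OF t]]] xxt by simp
  then show ?thesis using sandwich_eq_zero x t by blast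
qed

lemma mult_pos_if_commute:
  assumes y: "y \<in> Apos" and c: "c \<in> Apos" and yc: "y * c = c * y"
  shows "y * c \<in> Apos"
proof -
  obtain t where t: "t \<in> Apos" "t \<in> sa_CC A y" "t * t = y"
    using pos_sqrt_exists y by blast
  have "c \<in> sa_C A y" using c pos_mem yc unfolding sa_C_def sa_commute_def by auto
  then have "t * c = c * t" using t(2) unfolding sa_CC_def sa_commute_def by auto
  then have "t * c * t = y * c" using t(3) by (metis mult.assoc)
  then show ?thesis using sandwich_pos t(1) c by metis
qed

lemma pos_square_root_unique:
  assumes b: "b \<in> Apos" and r: "r \<in> Apos" and rCC: "r \<in> sa_CC A (b * b)"
    and rr: "r * r = b * b"
  shows "b = r"
proof -
  have "b \<in> sa_C A (b * b)"
    using pos_mem[OF b] unfolding sa_C_def sa_commute_def by (simp add: mult.assoc)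
  then have br: "r * b = b * r" using rCC unfolding sa_CC_def sa_commute_def by auto
  define x where "x = b - r"
  have xA: "x \<in> A" unfolding x_def using diff_mem pos_mem b r by simp
  have "x * b = b * x" and "x * r = r * x"
    unfolding x_def using br by (simp_all add: algebra_simps)
  then have pos_b: "x * x * b \<in> Apos" and pos_r: "x * x * r \<in> Apos"
    using mult_pos_if_commute[OF square_pos[OF xA] b] mult_pos_if_commute[OF square_pos[OF xA] r]
      commute_square_if_commute[of x b] commute_square_if_commute[of x r] by auto
  \<comment> \<open>\<open>x(b + r) = b\<^sup>2 - r\<^sup>2 = 0\<close>, so the two positive elements above sum to zero\<close>
  have "x * x * b + x * x * r = x * (x * (b + r))" by (simp add: algebra_simps)
  also have "x * (b + r) = 0" unfolding x_def using br rr by (simp add: algebra_simps)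
  finally have "x * x * b = - (x * x * r)" by (simp add: eq_neg_iff_add_eq_0)
  then have "x * x * r = 0" and "x * x * b = 0"
    using pos_antisym[OF pos_r] pos_b by auto
  then have "x * b = 0" and "x * r = 0"
    using square_mult_pos_eq_zero_imp[OF xA] b r by auto
  then have "x * x = 0" unfolding x_def by (simp add: right_diff_distrib)
  then show ?thesis using square_eq_zero_imp[OF xA] unfolding x_def by simp
qed

lemma sa_sqrt_spec:
  assumes a: "a \<in> Apos"
  shows "sa_sqrt Apos a \<in> Apos \<and> sa_sqrt Apos a * sa_sqrt Apos a = a \<and>
    sa_sqrt Apos a \<in> sa_CC A a"
proof -
  obtain r where r: "r \<in> Apos" "r \<in> sa_CC A a" "r * r = a"
    using pos_sqrt_exists a by blast
  have "sa_sqrt Apos a = r"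
    unfolding sa_sqrt_def
  proof (rule the_equality)
    fix b assume "b \<in> Apos \<and> b * b = a"
    then show "b = r" using pos_square_root_unique[of b r] r by auto
  qed (use r in simp)
  then show ?thesis using r by simp
qed

lemma proj_mem: "p \<in> sa_P A \<Longrightarrow> p \<in> A"
  unfolding sa_P_def by simp

lemma proj_idem: "p \<in> sa_P A \<Longrightarrow> p * p = p"
  unfolding sa_P_def by simp

lemma proj_pos: "p \<in> sa_P A \<Longrightarrow> p \<in> Apos"
  unfolding sa_P_def using square_pos by force

lemma perp_proj:
  assumes "p \<in> sa_P A"
  shows "sa_perp p \<in> sa_P A"
proof -
  have "(1 - p) * (1 - p) = 1 - p" using proj_idem[OF assms] by (simp add: algebra_simps)
  then show ?thesis
    using diff_mem[OF one_mem proj_mem[OF assms]] unfolding sa_P_def sa_perp_def by auto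
qed

lemma proj_mult_if_commute:
  assumes x: "x \<in> sa_P A" and y: "y \<in> sa_P A" and xy: "x * y = y * x"
  shows "x * y \<in> sa_P A"
proof -
  have "(x * y) * (x * y) = (x * x) * (y * y)" using xy by (metis mult.assoc)
  then have "(x * y) * (x * y) = x * y" using proj_idem x y by simp
  moreover have "x * y \<in> A" using mult_mem_if_commute[OF proj_mem[OF x] proj_mem[OF y] xy] .
  ultimately show ?thesis unfolding sa_P_def by simp
qed

lemma proj_le_iff:
  assumes t: "t \<in> sa_P A" and x: "x \<in> sa_P A"
  shows "sa_le Apos t x \<longleftrightarrow> t * x = t \<and> x * t = t"
proof
  assume "sa_le Apos t x"
  then have xt: "x - t \<in> Apos" unfolding sa_le_def .
  define g where "g = 1 - x"
  have gP: "g \<in> sa_P A" using perp_proj[OF x] unfolding g_def sa_perp_def .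
  have "g * x = 0" and "x * g = 0"
    using proj_idem[OF x] unfolding g_def by (simp_all add: algebra_simps)
  then have "g * (x - t) * g = - (g * t * g)" by (simp add: algebra_simps)
  then have "g * t * g = 0"
    using pos_antisym sandwich_pos[OF proj_pos[OF gP]] proj_pos[OF t] xt by metis
  then have "g * t = 0 \<and> t * g = 0"
    using sandwich_eq_zero proj_mem[OF gP] proj_pos[OF t] by blast
  then show "t * x = t \<and> x * t = t" unfolding g_def by (simp add: algebra_simps)
next
  assume tx: "t * x = t \<and> x * t = t"
  then have "x * (1 - t) = x - t" and "(1 - t) * x = x - t" by (simp_all add: algebra_simps)
  then have "x - t \<in> sa_P A"
    using proj_mult_if_commute[OF x perp_proj[OF t]] unfolding sa_perp_def by simp
  then show "sa_le Apos t x" unfolding sa_le_def using proj_pos by blast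
qed

lemma meet_eqI:
  assumes m: "m \<in> sa_P A" and mx: "sa_le Apos m x" and my: "sa_le Apos m y"
    and greatest: "\<And>t. t \<in> sa_P A \<Longrightarrow> sa_le Apos t x \<Longrightarrow> sa_le Apos t y \<Longrightarrow> sa_le Apos t m"
  shows "sa_meet A Apos x y = m"
  unfolding sa_meet_def
proof (rule the_equality)
  fix r assume r: "r \<in> sa_P A \<and> sa_le Apos r x \<and> sa_le Apos r y \<and>
      (\<forall>t\<in>sa_P A. sa_le Apos t x \<and> sa_le Apos t y \<longrightarrow> sa_le Apos t r)"
  then have "sa_le Apos r m" and "sa_le Apos m r" using greatest m mx my by auto
  then show "r = m" unfolding sa_le_def using pos_antisym[of "m - r"] by simp
qed (use assms in auto)

lemma meet_eq_mult_if_commute: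
  assumes x: "x \<in> sa_P A" and y: "y \<in> sa_P A" and xy: "x * y = y * x"
  shows "sa_meet A Apos x y = x * y"
proof (rule meet_eqI)
  have xx: "x * x = x" and yy: "y * y = y" using proj_idem x y by auto
  have xyP: "x * y \<in> sa_P A" using proj_mult_if_commute x y xy by blast
  have "x * y * x = x * y \<and> x * (x * y) = x * y"
    and "x * y * y = x * y \<and> y * (x * y) = x * y"
    using xx yy xy by (metis mult.assoc)+
  then show "sa_le Apos (x * y) x" and "sa_le Apos (x * y) y"
    using proj_le_iff[OF xyP] x y by blast+
  fix t assume t: "t \<in> sa_P A" and "sa_le Apos t x" and "sa_le Apos t y"
  then have "t * x = t \<and> x * t = t" and "t * y = t \<and> y * t = t"
    using proj_le_iff x y by blast+
  then show "sa_le Apos t (x * y)" using proj_le_iff[OF t xyP] by (metis mult.assoc)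
qed (use proj_mult_if_commute x y xy in blast)

lemma proj_eq_if_same_annihilators:
  assumes f: "f \<in> sa_P A" and g: "g \<in> sa_P A"
    and ann: "\<And>b. b \<in> A \<Longrightarrow> f * b = 0 \<longleftrightarrow> g * b = 0"
  shows "f = g"
proof -
  have "f * (1 - f) = 0" and "g * (1 - g) = 0"
    using proj_idem f g by (simp_all add: algebra_simps)
  then have "g * (1 - f) = 0" and "f * (1 - g) = 0"
    using ann diff_mem[OF one_mem] proj_mem f g by blast+
  moreover from this have "(1 - g) * f = 0"
    using pos_mult_eq_zero_sym proj_mem[OF f] proj_pos[OF perp_proj[OF g]]
    unfolding sa_perp_def by blast
  ultimately show ?thesis by (simp add: algebra_simps)
qed

lemma sa_carrier_spec:
  assumes "z \<in> A"
  shows "sa_carrier A z \<in> sa_P A \<and> (\<forall>b\<in>A. z * b = 0 \<longleftrightarrow> sa_carrier A z * b = 0)"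
proof -
  obtain f where f: "f \<in> sa_P A" "\<forall>b\<in>A. z * b = 0 \<longleftrightarrow> f * b = 0"
    using carrier_exists assms by blast
  have "sa_carrier A z = f"
    unfolding sa_carrier_def
  proof (rule the_equality)
    fix g assume g: "g \<in> sa_P A \<and> (\<forall>b\<in>A. z * b = 0 \<longleftrightarrow> g * b = 0)"
    show "g = f"
      by (rule proj_eq_if_same_annihilators) (use f g in auto)
  qed (use f in blast)
  then show ?thesis using f by simp
qed

lemma commute_carrier:
  assumes x: "x \<in> A" and e: "e \<in> A" and ex: "e * x = x * e"
  shows "e * sa_carrier A x = sa_carrier A x * e"
proof -
  define f where "f = sa_carrier A x"
  define u where "u = 1 - f"
  have fP: "f \<in> sa_P A" and ann: "\<forall>b\<in>A. x * b = 0 \<longleftrightarrow> f * b = 0"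
    using sa_carrier_spec[OF x] unfolding f_def by auto
  have uP: "u \<in> sa_P A" using perp_proj[OF fP] unfolding u_def sa_perp_def .
  have fA: "f \<in> A" and uA: "u \<in> A" using fP uP proj_mem by auto
  have fu: "f * u = 0" "u * f = 0" unfolding u_def using proj_idem[OF fP]
    by (simp_all add: algebra_simps)
  have "x * u = 0" using ann uA fu by blast
  moreover have "x * (e * u * e) = e * (x * u) * e" using ex by (metis mult.assoc)
  ultimately have feue: "f * (e * u * e) = 0"
    using ann sandwich_mem[OF e uA] by simp
  \<comment> \<open>the Jordan product \<open>ef + fe\<close> lies in \<open>A\<close> and \<open>(ef + fe) u (ef + fe) = f(eue)f = 0\<close>\<close>
  define j where "j = e * f + f * e"
  have jA: "j \<in> A" unfolding j_def using jordan_mem[OF e fA] .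
  have ju: "j * u = f * e * u"
    unfolding j_def using fu by (simp add: distrib_right mult.assoc)
  have uj: "u * j = u * e * f"
    unfolding j_def using fu by (simp add: distrib_left flip: mult.assoc)
  have "j * u * j = f * e * (u * j)" using ju by (metis mult.assoc)
  also have "\<dots> = (f * (e * u * e)) * f" using uj by (simp add: mult.assoc)
  finally have "j * u * j = 0" using feue by simp
  then have "j * u = 0" and "u * j = 0"
    using sandwich_eq_zero[OF jA proj_pos[OF uP]] by auto
  then have feu: "f * e * u = 0" and uef: "u * e * f = 0" using ju uj by simp_all
  have fu1: "f + u = 1" unfolding u_def by simp
  have "e * u = (f + u) * e * u" using fu1 by simp
  also have "\<dots> = u * e * u" using feu by (simp add: distrib_right)
  also have "\<dots> = u * e * (f + u)" using uef by (simp add: distrib_left)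
  also have "\<dots> = u * e" using fu1 by simp
  finally have "e * u = u * e" .
  then show ?thesis unfolding f_def[symmetric] using u_def by (simp add: algebra_simps)
qed

lemma carrier_sqrt_square_mult_eq_zero_iff:
  assumes d: "d \<in> A" and t: "t \<in> Apos"
  shows "sa_carrier A (sa_sqrt Apos (d * d)) * t = 0 \<longleftrightarrow> d * t = 0"
proof -
  define s where "s = sa_sqrt Apos (d * d)"
  have sA: "s \<in> A" and ss: "s * s = d * d"
    using sa_sqrt_spec[OF square_pos[OF d]] pos_mem unfolding s_def by auto
  have "s * t = 0 \<longleftrightarrow> d * t = 0"
  proof
    assume "s * t = 0"
    then have "d * d * t = 0" using ss by (metis mult.assoc mult_zero_right)
    then show "d * t = 0" using square_mult_pos_eq_zero_imp[OF d t] by blast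
  next
    assume "d * t = 0"
    then have "s * s * t = 0" using ss by (metis mult.assoc mult_zero_right)
    then show "s * t = 0" using square_mult_pos_eq_zero_imp[OF sA t] by blast
  qed
  then show ?thesis using sa_carrier_spec[OF sA] pos_mem[OF t] unfolding s_def by blast
qed

lemma commute_carrier_sqrt_square_if_anticommute:
  assumes d: "d \<in> A" and e: "e \<in> A" and ed: "e * d = - (d * e)"
  shows "e * sa_carrier A (sa_sqrt Apos (d * d)) = sa_carrier A (sa_sqrt Apos (d * d)) * e"
proof -
  define s where "s = sa_sqrt Apos (d * d)"
  have sA: "s \<in> A" and sCC: "s \<in> sa_CC A (d * d)"
    using sa_sqrt_spec[OF square_pos[OF d]] pos_mem unfolding s_def by auto
  have "e \<in> sa_C A (d * d)"
    using e commute_square_if_anticommute[OF ed] unfolding sa_C_def sa_commute_def by simp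
  then have "e * s = s * e" using sCC unfolding sa_CC_def sa_commute_def by auto
  then show ?thesis using commute_carrier[OF sA e] unfolding s_def by simp
qed

lemma perp_carrier_abs_diff:
  assumes p: "p \<in> sa_P A" and q: "q \<in> sa_P A"
    and s_def: "s = sa_sqrt Apos (p * sa_perp q * p + sa_perp p * q * sa_perp p)"
  shows "let u = sa_perp (sa_carrier A s) in
        u * p = p * u \<and> p * u = u * q \<and> u * q = q * u \<and> q * u = sa_meet A Apos u p \<and>
        sa_meet A Apos u p = sa_meet A Apos u q \<and> sa_meet A Apos u q = sa_meet A Apos p q"
proof -
  have pA: "p \<in> A" and qA: "q \<in> A" and pp: "p * p = p" and qq: "q * q = q"
    using p q proj_mem proj_idem by auto
  define d where "d = p - q"
  define e where "e = p + q - 1"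
  define f where "f = sa_carrier A s"
  define u where "u = 1 - f"
  have dA: "d \<in> A" and eA: "e \<in> A"
    unfolding d_def e_def using diff_mem add_mem pA qA one_mem by auto
  have s: "s = sa_sqrt Apos (d * d)"
    unfolding s_def d_def sa_perp_def using idempotents_sandwich_sum[OF pp qq] by simp
  have fP: "f \<in> sa_P A"
    using sa_carrier_spec[of s] sa_sqrt_spec[OF square_pos[OF dA]] pos_mem s unfolding f_def by auto
  have uP: "u \<in> sa_P A" using perp_proj[OF fP] unfolding u_def sa_perp_def .
  have ann: "t \<in> Apos \<Longrightarrow> f * t = 0 \<longleftrightarrow> d * t = 0" for t
    using carrier_sqrt_square_mult_eq_zero_iff[OF dA] unfolding f_def s by blast
  have "f * u = 0" unfolding u_def using proj_idem[OF fP] by (simp add: algebra_simps)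
  then have du: "d * u = 0" "u * d = 0"
    using ann[OF proj_pos[OF uP]] pos_mult_eq_zero_sym[OF dA proj_pos[OF uP]] by auto
  have "e * u = u * e"
    using commute_carrier_sqrt_square_if_anticommute[OF dA eA]
      idempotents_anticommute[OF pp qq]
    unfolding u_def f_def s d_def e_def by (simp add: algebra_simps)
  \<comment> \<open>\<open>2p = d + e + 1\<close>\<close>
  with du have "(2::real) *\<^sub>R (p * u) = (2::real) *\<^sub>R (u * p)"
    unfolding d_def e_def by (simp add: scaleR_2 algebra_simps)
  then have pu: "p * u = u * p" by simp
  have qu: "q * u = p * u" "u * q = u * p"
    using du unfolding d_def by (simp_all add: algebra_simps)
  have upP: "u * p \<in> sa_P A" using proj_mult_if_commute[OF uP p] pu by simp
  have meet_pq: "sa_meet A Apos p q = u * p"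
  proof (rule meet_eqI[OF upP])
    have "u * p * p = u * p \<and> p * (u * p) = u * p"
      and "u * p * q = u * p \<and> q * (u * p) = u * p"
      using pp qq pu qu by (metis mult.assoc)+
    then show "sa_le Apos (u * p) p" and "sa_le Apos (u * p) q"
      using proj_le_iff[OF upP] p q by blast+
    fix t assume t: "t \<in> sa_P A" and "sa_le Apos t p" and "sa_le Apos t q"
    then have tp: "t * p = t \<and> p * t = t" and "t * q = t \<and> q * t = t"
      using proj_le_iff p q by blast+
    then have "d * t = 0" unfolding d_def by (simp add: algebra_simps)
    then have "f * t = 0" and "t * f = 0"
      using ann pos_mult_eq_zero_sym proj_mem[OF fP] proj_pos[OF t] by blast+
    then have "t * u = t \<and> u * t = t" unfolding u_def by (simp add: algebra_simps)
    then show "sa_le Apos t (u * p)" using proj_le_iff[OF t upP] tp by (metis mult.assoc)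
  qed
  show ?thesis
    unfolding Let_def sa_perp_def f_def[symmetric] u_def[symmetric]
    using pu qu meet_pq meet_eq_mult_if_commute[OF uP] p q by simp
qed

end

theorem corollary4p5:
  fixes A Apos :: "'a::real_algebra_1 set" and p q c s :: 'a
  assumes SA: "synaptic_algebra A Apos"
    and p: "p \<in> sa_P A" and q: "q \<in> sa_P A"
    and c_def: "c = sa_sqrt Apos (p * q * p + sa_perp p * sa_perp q * sa_perp p)"
    and s_def: "s = sa_sqrt Apos (p * sa_perp q * p + sa_perp p * q * sa_perp p)"
  shows
    "(let u = sa_perp (sa_carrier A s) in
        u * p = p * u \<and> p * u = u * q \<and> u * q = q * u \<and> q * u = sa_meet A Apos u p \<and>
        sa_meet A Apos u p = sa_meet A Apos u q \<and> sa_meet A Apos u q = sa_meet A Apos p q)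
     \<and>
     (let u = sa_perp (sa_carrier A c) in
        u * p = p * u \<and> p * u = u * sa_perp q \<and> u * sa_perp q = sa_perp q * u \<and>
        sa_perp q * u = sa_meet A Apos u p \<and>
        sa_meet A Apos u p = sa_meet A Apos u (sa_perp q) \<and>
        sa_meet A Apos u (sa_perp q) = sa_meet A Apos p (sa_perp q))
     \<and>
     (let u = sa_perp (sa_carrier A c) in
        u * sa_perp p = sa_perp p * u \<and> sa_perp p * u = u * q \<and> u * q = q * u \<and>
        q * u = sa_meet A Apos u (sa_perp p) \<and>
        sa_meet A Apos u (sa_perp p) = sa_meet A Apos u q \<and>
        sa_meet A Apos u q = sa_meet A Apos (sa_perp p) q)
     \<and>
     (let u = sa_perp (sa_carrier A s) in
        u * sa_perp p = sa_perp p * u \<and> sa_perp p * u = u * sa_perp q \<and>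
        u * sa_perp q = sa_perp q * u \<and> sa_perp q * u = sa_meet A Apos u (sa_perp p) \<and>
        sa_meet A Apos u (sa_perp p) = sa_meet A Apos u (sa_perp q) \<and>
        sa_meet A Apos u (sa_perp q) = sa_meet A Apos (sa_perp p) (sa_perp q))"
proof -
  have p': "sa_perp p \<in> sa_P A" and q': "sa_perp q \<in> sa_P A"
    using perp_proj[OF SA] p q by auto
  have perp_perp: "sa_perp (sa_perp x) = x" for x :: 'a
    by (simp add: sa_perp_def)
  have "c = sa_sqrt Apos (p * sa_perp (sa_perp q) * p + sa_perp p * sa_perp q * sa_perp p)"
    and "c = sa_sqrt Apos (sa_perp p * sa_perp q * sa_perp p
                           + sa_perp (sa_perp p) * q * sa_perp (sa_perp p))"
    and "s = sa_sqrt Apos (sa_perp p * sa_perp (sa_perp q) * sa_perp p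
                           + sa_perp (sa_perp p) * sa_perp q * sa_perp (sa_perp p))"
    using c_def s_def by (simp_all add: perp_perp add.commute)
  then show ?thesis
    using perp_carrier_abs_diff[OF SA p q s_def] perp_carrier_abs_diff[OF SA p q']
      perp_carrier_abs_diff[OF SA p' q] perp_carrier_abs_diff[OF SA p' q']
    by blast
qed

end
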